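(* For any integer $p\ge2$ and any partition $\lambda$ with $p$-core $\bar\lambda$, the ratio $H_{\text{non-}p\text{-fold}}(\lambda)/H(\bar\lambda)$ is an integer.
   Context: For a partition $\lambda$, the hook length of a box of its Young diagram is the number of boxes to its right in its row plus the number below it in its column plus one; $H(\lambda)$ is the product of all hook lengths and $H_{\text{non-}p\text{-fold}}(\lambda)$ the product of the hook lengths not divisible by $p$. A border strip of size $p$ is a connected skew Young diagram with $p$ boxes containing no $2\times2$ square; the $p$-core $\bar\lambda$ is the partition obtained from $\lambda$ by repeatedly removing border strips of size $p$ (keeping a Young diagram after each removal) until no removal is possible; it is independent of the choices. *)

theory Defs
  imports Main
begin

definition is_partition :: "nat list \<Rightarrow> bool" where
  "is_partition la \<longleftrightarrow> sorted_wrt (\<ge>) la \<and> (\<forall>x\<in>set la. 0 < x)"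

definition cells :: "nat list \<Rightarrow> (nat \<times> nat) set" where
  "cells la = {(i, j). i < length la \<and> j < la ! i}"

definition hook :: "nat list \<Rightarrow> nat \<times> nat \<Rightarrow> nat" where
  "hook la c = (case c of (i, j) \<Rightarrow>
     card {j'. j < j' \<and> (i, j') \<in> cells la} + card {i'. i < i' \<and> (i', j) \<in> cells la} + 1)"

definition hook_prod :: "nat list \<Rightarrow> nat" where
  "hook_prod la = (\<Prod>c\<in>cells la. hook la c)"

definition hook_prod_non_pfold :: "nat \<Rightarrow> nat list \<Rightarrow> nat" where
  "hook_prod_non_pfold p la = (\<Prod>c\<in>{c \<in> cells la. \<not> p dvd hook la c}. hook la c)"

definition adjacent :: "nat \<times> nat \<Rightarrow> nat \<times> nat \<Rightarrow> bool" where
  "adjacent c d \<longleftrightarrow> (case (c, d) of ((i, j), (i', j')) \<Rightarrow>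
     (i = i' \<and> (j' = Suc j \<or> j = Suc j')) \<or> (j = j' \<and> (i' = Suc i \<or> i = Suc i')))"

definition cells_connected :: "(nat \<times> nat) set \<Rightarrow> bool" where
  "cells_connected S \<longleftrightarrow> S \<noteq> {} \<and>
     (\<forall>c\<in>S. \<forall>d\<in>S. (\<lambda>x y. x \<in> S \<and> y \<in> S \<and> adjacent x y)\<^sup>*\<^sup>* c d)"

definition no_2x2 :: "(nat \<times> nat) set \<Rightarrow> bool" where
  "no_2x2 S \<longleftrightarrow> \<not> (\<exists>i j. (i, j) \<in> S \<and> (Suc i, j) \<in> S \<and> (i, Suc j) \<in> S \<and> (Suc i, Suc j) \<in> S)"

definition remove_strip :: "nat \<Rightarrow> nat list \<Rightarrow> nat list \<Rightarrow> bool" where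
  "remove_strip p la mu \<longleftrightarrow> is_partition mu \<and> cells mu \<subseteq> cells la \<and>
     card (cells la - cells mu) = p \<and> cells_connected (cells la - cells mu) \<and>
     no_2x2 (cells la - cells mu)"

definition is_p_core :: "nat \<Rightarrow> nat list \<Rightarrow> nat list \<Rightarrow> bool" where
  "is_p_core p la mu \<longleftrightarrow> (remove_strip p)\<^sup>*\<^sup>* la mu \<and> \<not> (\<exists>nu. remove_strip p mu nu)"

end

theory Submission
  imports Defs
begin

text \<open>Pad a partition to n rows and record it on a p-runner abacus by its beta-set
  X = {\<lambda> i + n - 1 - i | i < n}. The hook lengths are exactly the differences b - c of a bead b \<in> X and
  a gap c \<notin> X below it, and removing a border strip of size p moves one bead b down to the gap
  b - p. So every partition on the way from \<lambda> to its p-core has the same number of beads on each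
  runner (residue class mod p), and the beta-set Y of the core is closed under b \<mapsto> b - p,
  i.e. each runner of Y is an initial segment. Consequently no hook of the core has length divisible
  by p, and on each runner the number of bead-gap pairs at distance h in Y is at most the number in
  X, since the beads of Y are packed as low as possible. Comparing multiplicities of each hook length
  h gives the divisibility.\<close>

section \<open>Beads and gaps in sets of naturals\<close>

definition p_down_closed :: "nat \<Rightarrow> nat set \<Rightarrow> bool" where
  "p_down_closed p Y \<longleftrightarrow> (\<forall>y\<in>Y. p \<le> y \<longrightarrow> y - p \<in> Y)"

lemma p_down_closed_mod:
  assumes "p_down_closed p Y" "y \<in> Y" "z \<le> y" "z mod p = y mod p"
  shows "z \<in> Y"
  using assms(2-4)
proof (induction y rule: less_induct)
  case (less y)
  show ?case
  proof (cases "z = y")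
    case False
    with less.prems have "z < y" by simp
    moreover from less.prems(2,3) have "p dvd y - z"
      by (metis mod_eq_dvd_iff_nat)
    ultimately have p: "0 < p" "p \<le> y - z"
      by (auto intro: dvd_imp_le Nat.gr0I)
    have "y - p \<in> Y"
      using assms(1) less.prems(1) p(2) unfolding p_down_closed_def by simp
    moreover have "z mod p = (y - p) mod p"
      using less.prems(3) p(2) by (simp add: le_mod_geq)
    moreover have "y - p < y" "z \<le> y - p"
      using p by auto
    ultimately show ?thesis
      using less.IH by blast
  qed (use less.prems in simp)
qed

lemma card_filter_eq_if_fibres_eq:
  fixes \<phi> :: "'a \<Rightarrow> 'b"
  assumes "finite X" "finite Y" and fibres: "\<And>s. card {x\<in>X. \<phi> x = s} = card {y\<in>Y. \<phi> y = s}"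
  shows "card {x\<in>X. P (\<phi> x)} = card {y\<in>Y. P (\<phi> y)}"
proof -
  define T where "T = {s \<in> \<phi> ` (X \<union> Y). P s}"
  have split: "card {x\<in>A. P (\<phi> x)} = (\<Sum>s\<in>T. card {x\<in>A. \<phi> x = s})"
    if "finite A" "A \<subseteq> X \<union> Y" for A
  proof -
    have "card {x\<in>A. P (\<phi> x)} = (\<Sum>s\<in>T. \<Sum>x\<in>{x\<in>{x\<in>A. P (\<phi> x)}. \<phi> x = s}. 1)"
      using that assms(1,2) by (subst sum.group) (auto simp: T_def)
    also have "\<dots> = (\<Sum>s\<in>T. card {x\<in>A. \<phi> x = s})"
      by (intro sum.cong) (auto simp: T_def intro!: arg_cong[where f = card])
    finally show ?thesis .
  qed
  show ?thesis
    using split[of X] split[of Y] assms(1,2) fibres by simp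
qed

lemma card_mod_insert_Diff:
  fixes X :: "nat set"
  assumes "finite X" "b \<in> X" "c \<notin> X" "c + p = b"
  shows "card {x \<in> insert c (X - {b}). x mod p = t} = card {x\<in>X. x mod p = t}"
proof (cases "b mod p = t")
  case True
  have "c mod p = t"
    using True assms(4) mod_add_self2[of c p] by simp
  then have "{x \<in> insert c (X - {b}). x mod p = t} = insert c ({x\<in>X. x mod p = t} - {b})"
    by auto
  then show ?thesis
    using assms(1-3) True card_Suc_Diff1[of "{x\<in>X. x mod p = t}" b] by simp
next
  case False
  then have "{x \<in> insert c (X - {b}). x mod p = t} = {x\<in>X. x mod p = t}"
    using assms(2,4) by auto
  then show ?thesis
    by simp
qed

definition hook_count :: "nat set \<Rightarrow> nat \<Rightarrow> nat" where
  "hook_count X h = card {b\<in>X. h \<le> b \<and> b - h \<notin> X}"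

definition hook_count_residue :: "nat \<Rightarrow> nat \<Rightarrow> nat set \<Rightarrow> nat \<Rightarrow> nat" where
  "hook_count_residue p r X h = card {b\<in>X. b mod p = r \<and> h \<le> b \<and> b - h \<notin> X}"

lemma hook_count_eq_sum_residues:
  assumes "finite X" "0 < p"
  shows "hook_count X h = (\<Sum>r<p. hook_count_residue p r X h)"
  unfolding hook_count_def hook_count_residue_def
  using assms by (subst card_eq_sum, subst sum.group[symmetric, where g = "\<lambda>b. b mod p" and T = "{..<p}"])
    (auto intro!: sum.cong arg_cong[where f = card])

lemma hook_count_residue_eq_diff:
  assumes "finite X"
  shows "hook_count_residue p r X h =
    card {b\<in>X. b mod p = r \<and> h \<le> b} - card {b\<in>X. b mod p = r \<and> h \<le> b \<and> b - h \<in> X}"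
proof -
  have "hook_count_residue p r X h =
      card ({b\<in>X. b mod p = r \<and> h \<le> b} - {b\<in>X. b mod p = r \<and> h \<le> b \<and> b - h \<in> X})"
    unfolding hook_count_residue_def by (rule arg_cong[where f = card]) blast
  also have "\<dots> =
      card {b\<in>X. b mod p = r \<and> h \<le> b} - card {b\<in>X. b mod p = r \<and> h \<le> b \<and> b - h \<in> X}"
    using assms by (intro card_Diff_subset) auto
  finally show ?thesis .
qed

lemma hook_count_residue_lower_bound:
  assumes "finite X"
  shows "card {b\<in>X. b mod p = r} - card {z. z mod p = r \<and> z < h} - card {w\<in>X. (w + h) mod p = r}
    \<le> hook_count_residue p r X h"
proof -
  have "{b\<in>X. b mod p = r} \<subseteq> {b\<in>X. b mod p = r \<and> h \<le> b} \<union> {z. z mod p = r \<and> z < h}"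
    by auto
  then have "card {b\<in>X. b mod p = r}
      \<le> card ({b\<in>X. b mod p = r \<and> h \<le> b} \<union> {z. z mod p = r \<and> z < h})"
    using assms by (intro card_mono) auto
  also have "\<dots> \<le> card {b\<in>X. b mod p = r \<and> h \<le> b} + card {z. z mod p = r \<and> z < h}"
    by (rule card_Un_le)
  finally have "card {b\<in>X. b mod p = r}
      \<le> card {b\<in>X. b mod p = r \<and> h \<le> b} + card {z. z mod p = r \<and> z < h}" .
  moreover have "card {b\<in>X. b mod p = r \<and> h \<le> b \<and> b - h \<in> X} \<le> card {w\<in>X. (w + h) mod p = r}"
  proof (rule card_inj_on_le)
    show "inj_on (\<lambda>b. b - h) {b\<in>X. b mod p = r \<and> h \<le> b \<and> b - h \<in> X}"
      by (auto simp: inj_on_def)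
  qed (use assms in auto)
  ultimately show ?thesis
    using hook_count_residue_eq_diff[OF assms, of p r h] by linarith
qed

text \<open>If Y is p-down-closed and has a hook y \<rightarrow> y - h in residue class r, then the whole class below h
  lies in Y, and every w \<in> Y with w + h in class r lies below y - h, so w + h \<in> Y as well.\<close>
lemma hook_count_residue_upper_bound:
  assumes "finite Y" "p_down_closed p Y" "y \<in> Y" "y mod p = r" "h \<le> y" "y - h \<notin> Y"
  shows "hook_count_residue p r Y h
    \<le> card {b\<in>Y. b mod p = r} - card {z. z mod p = r \<and> z < h} - card {w\<in>Y. (w + h) mod p = r}"
proof -
  have low: "{z. z mod p = r \<and> z < h} \<subseteq> Y"
    using p_down_closed_mod[OF assms(2,3)] assms(4,5) by force
  have "{b\<in>Y. b mod p = r} = {b\<in>Y. b mod p = r \<and> h \<le> b} \<union> {z. z mod p = r \<and> z < h}"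
    using low by auto
  then have above: "card {b\<in>Y. b mod p = r \<and> h \<le> b} =
      card {b\<in>Y. b mod p = r} - card {z. z mod p = r \<and> z < h}"
    using assms(1) by (simp add: card_Un_disjoint disjoint_iff)
  have "{w\<in>Y. (w + h) mod p = r} \<subseteq> (\<lambda>b. b - h) ` {b\<in>Y. b mod p = r \<and> h \<le> b \<and> b - h \<in> Y}"
  proof
    fix w assume w: "w \<in> {w\<in>Y. (w + h) mod p = r}"
    have "w < y - h"
    proof (rule ccontr)
      assume "\<not> w < y - h"
      moreover have "(y - h + h) mod p = (w + h) mod p"
        using w assms(4,5) by simp
      then have "(y - h) mod p = w mod p"
        by (simp add: nat_mod_eq_iff add.assoc add.commute)
      ultimately have "y - h \<in> Y"
        using p_down_closed_mod[OF assms(2), of w "y - h"] w by simp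
      with assms(6) show False ..
    qed
    then have "w + h \<in> Y"
      using p_down_closed_mod[OF assms(2,3), of "w + h"] w assms(4) by simp
    with w show "w \<in> (\<lambda>b. b - h) ` {b\<in>Y. b mod p = r \<and> h \<le> b \<and> b - h \<in> Y}"
      by (intro image_eqI[where x = "w + h"]) auto
  qed
  then have "card {w\<in>Y. (w + h) mod p = r}
      \<le> card ((\<lambda>b. b - h) ` {b\<in>Y. b mod p = r \<and> h \<le> b \<and> b - h \<in> Y})"
    using assms(1) by (intro card_mono) auto
  also have "\<dots> \<le> card {b\<in>Y. b mod p = r \<and> h \<le> b \<and> b - h \<in> Y}"
    using assms(1) by (intro card_image_le) auto
  finally have "card {w\<in>Y. (w + h) mod p = r} \<le> card {b\<in>Y. b mod p = r \<and> h \<le> b \<and> b - h \<in> Y}" .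
  then show ?thesis
    using hook_count_residue_eq_diff[OF assms(1), of p r h] above by linarith
qed

lemma hook_count_mono:
  assumes "finite X" "finite Y" "0 < p" "p_down_closed p Y"
    and residues: "\<And>r. card {x\<in>X. x mod p = r} = card {y\<in>Y. y mod p = r}"
  shows "hook_count Y h \<le> hook_count X h"
  unfolding hook_count_eq_sum_residues[OF assms(1,3)] hook_count_eq_sum_residues[OF assms(2,3)]
proof (rule sum_mono)
  fix r
  show "hook_count_residue p r Y h \<le> hook_count_residue p r X h"
  proof (cases "hook_count_residue p r Y h = 0")
    case False
    then have "{b\<in>Y. b mod p = r \<and> h \<le> b \<and> b - h \<notin> Y} \<noteq> {}"
      unfolding hook_count_residue_def by (metis card.empty)
    then obtain y where y: "y \<in> Y" "y mod p = r" "h \<le> y" "y - h \<notin> Y"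
      by blast
    have "card {w\<in>X. (w mod p + h) mod p = r} = card {w\<in>Y. (w mod p + h) mod p = r}"
      using card_filter_eq_if_fibres_eq[OF assms(1,2) residues] .
    then have "card {w\<in>X. (w + h) mod p = r} = card {w\<in>Y. (w + h) mod p = r}"
      unfolding mod_add_left_eq .
    then show ?thesis
      using hook_count_residue_upper_bound[OF assms(2,4) y] hook_count_residue_lower_bound[OF assms(1), of p r h]
        residues[of r] by linarith
  qed simp
qed

lemma hook_count_multiple_eq_0:
  assumes "p_down_closed p Y" "p dvd h"
  shows "hook_count Y h = 0"
proof -
  have "b - h \<in> Y" if "b \<in> Y" "h \<le> b" for b
    using p_down_closed_mod[OF assms(1) that(1), of "b - h"] assms(2) that(2)
    by (metis diff_diff_cancel diff_le_self mod_eq_dvd_iff_nat)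
  then have "{b\<in>Y. h \<le> b \<and> b - h \<notin> Y} = {}"
    by blast
  then show ?thesis
    unfolding hook_count_def by (simp only: card.empty)
qed

definition bead_gap_pairs :: "(nat \<Rightarrow> bool) \<Rightarrow> nat set \<Rightarrow> (nat \<times> nat) set" where
  "bead_gap_pairs Q X = {(b, c). b \<in> X \<and> c \<notin> X \<and> c < b \<and> Q (b - c)}"

lemma bead_gap_pairs_diff_eq_image:
  assumes "0 < h" "Q h"
  shows "{q \<in> bead_gap_pairs Q X. fst q - snd q = h} = (\<lambda>b. (b, b - h)) ` {b\<in>X. h \<le> b \<and> b - h \<notin> X}"
proof (intro set_eqI iffI)
  fix q assume "q \<in> {q \<in> bead_gap_pairs Q X. fst q - snd q = h}"
  then obtain b c where "q = (b, c)" "b \<in> X" "c \<notin> X" "c < b" "b - c = h"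
    by (auto simp: bead_gap_pairs_def)
  then show "q \<in> (\<lambda>b. (b, b - h)) ` {b\<in>X. h \<le> b \<and> b - h \<notin> X}"
    by (intro image_eqI[where x = b]) auto
qed (use assms in \<open>auto simp: bead_gap_pairs_def\<close>)

lemma prod_bead_gap_pairs:
  assumes "finite X" "\<forall>x\<in>X. x \<le> M"
  shows "(\<Prod>(b, c)\<in>bead_gap_pairs Q X. b - c) = (\<Prod>h | 0 < h \<and> h \<le> M \<and> Q h. h ^ hook_count X h)"
proof -
  have "bead_gap_pairs Q X \<subseteq> X \<times> {..M}"
    using assms(2) by (auto simp: bead_gap_pairs_def)
  then have fin: "finite (bead_gap_pairs Q X)"
    by (rule finite_subset) (simp add: assms(1))
  have "(\<Prod>(b, c)\<in>bead_gap_pairs Q X. b - c) = (\<Prod>q\<in>bead_gap_pairs Q X. fst q - snd q)"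
    by (simp add: split_def)
  also have "\<dots> = (\<Prod>h | 0 < h \<and> h \<le> M \<and> Q h.
      \<Prod>q\<in>{q \<in> bead_gap_pairs Q X. fst q - snd q = h}. fst q - snd q)"
  proof (rule prod.group[symmetric])
    show "(\<lambda>q. fst q - snd q) ` bead_gap_pairs Q X \<subseteq> {h. 0 < h \<and> h \<le> M \<and> Q h}"
      using assms(2) by (auto simp: bead_gap_pairs_def)
  qed (simp_all add: fin)
  also have "\<dots> = (\<Prod>h | 0 < h \<and> h \<le> M \<and> Q h. h ^ hook_count X h)"
  proof (rule prod.cong[OF refl])
    fix h assume h: "h \<in> {h. 0 < h \<and> h \<le> M \<and> Q h}"
    have "(\<Prod>q\<in>{q \<in> bead_gap_pairs Q X. fst q - snd q = h}. fst q - snd q)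
        = h ^ card {q \<in> bead_gap_pairs Q X. fst q - snd q = h}"
      by simp
    also have "card {q \<in> bead_gap_pairs Q X. fst q - snd q = h} = hook_count X h"
      using h by (simp add: hook_count_def bead_gap_pairs_diff_eq_image card_image inj_on_def)
    finally show "(\<Prod>q\<in>{q \<in> bead_gap_pairs Q X. fst q - snd q = h}. fst q - snd q) = h ^ hook_count X h" .
  qed
  finally show ?thesis .
qed

lemma bead_gap_prod_dvd:
  assumes "finite X" "finite Y" "0 < p" "p_down_closed p Y"
    and "\<And>r. card {x\<in>X. x mod p = r} = card {y\<in>Y. y mod p = r}"
  shows "(\<Prod>(b, c)\<in>bead_gap_pairs (\<lambda>_. True) Y. b - c)
    dvd (\<Prod>(b, c)\<in>bead_gap_pairs (\<lambda>h. \<not> p dvd h) X. b - c)"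
proof -
  define M where "M = Max (X \<union> Y)"
  have bounds: "\<forall>x\<in>X. x \<le> M" "\<forall>y\<in>Y. y \<le> M"
    using assms(1,2) by (auto simp: M_def)
  have "(\<Prod>(b, c)\<in>bead_gap_pairs (\<lambda>_. True) Y. b - c) = (\<Prod>h | 0 < h \<and> h \<le> M. h ^ hook_count Y h)"
    using prod_bead_gap_pairs[OF assms(2) bounds(2), of "\<lambda>_. True"] by simp
  also have "\<dots> = (\<Prod>h | 0 < h \<and> h \<le> M \<and> \<not> p dvd h. h ^ hook_count Y h)"
    by (rule prod.mono_neutral_right) (auto simp: hook_count_multiple_eq_0[OF assms(4)])
  also have "\<dots> dvd (\<Prod>h | 0 < h \<and> h \<le> M \<and> \<not> p dvd h. h ^ hook_count X h)"
    by (intro prod_dvd_prod le_imp_power_dvd hook_count_mono[OF assms])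
  also have "\<dots> = (\<Prod>(b, c)\<in>bead_gap_pairs (\<lambda>h. \<not> p dvd h) X. b - c)"
    by (rule prod_bead_gap_pairs[OF assms(1) bounds(1), symmetric])
  finally show ?thesis .
qed

section \<open>Partitions and their beta-sets\<close>

definition part :: "nat list \<Rightarrow> nat \<Rightarrow> nat" where
  "part la i = (if i < length la then la ! i else 0)"

definition partition_fun :: "nat \<Rightarrow> (nat \<Rightarrow> nat) \<Rightarrow> bool" where
  "partition_fun n f \<longleftrightarrow> antimono f \<and> (\<forall>i\<ge>n. f i = 0)"

definition diagram :: "(nat \<Rightarrow> nat) \<Rightarrow> (nat \<times> nat) set" where
  "diagram f = {(i, j). j < f i}"

definition hook_fn :: "(nat \<Rightarrow> nat) \<Rightarrow> nat \<times> nat \<Rightarrow> nat" where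
  "hook_fn f c = (case c of (i, j) \<Rightarrow>
     card {j'. j < j' \<and> (i, j') \<in> diagram f} + card {i'. i < i' \<and> (i', j) \<in> diagram f} + 1)"

definition col_len :: "(nat \<Rightarrow> nat) \<Rightarrow> nat \<Rightarrow> nat" where
  "col_len f j = card {i. j < f i}"

text \<open>With f padded to n rows, beta f n i is the hook length of the cell (i, 0) (the first-column
  hook lengths, or beta-numbers) and col_gap f n j is the position of the gap that column j leaves in
  the abacus: the hook of cell (i, j) joins the bead beta f n i to the gap col_gap f n j.\<close>
definition beta :: "(nat \<Rightarrow> nat) \<Rightarrow> nat \<Rightarrow> nat \<Rightarrow> nat" where
  "beta f n i = f i + n - Suc i"

definition beta_set :: "(nat \<Rightarrow> nat) \<Rightarrow> nat \<Rightarrow> nat set" where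
  "beta_set f n = beta f n ` {..<n}"

definition col_gap :: "(nat \<Rightarrow> nat) \<Rightarrow> nat \<Rightarrow> nat \<Rightarrow> nat" where
  "col_gap f n j = j + n - col_len f j"

lemma cells_eq_diagram_part: "cells la = diagram (part la)"
  unfolding cells_def diagram_def part_def by (auto split: if_splits)

lemma hook_eq_hook_fn_part: "hook la = hook_fn (part la)"
  unfolding hook_def hook_fn_def cells_eq_diagram_part ..

lemma partition_fun_part:
  assumes "is_partition la"
  shows "partition_fun (length la) (part la)"
  unfolding partition_fun_def
proof (intro conjI antimonoI allI impI)
  fix i j :: nat assume "i \<le> j"
  then show "part la j \<le> part la i"
    using assms sorted_wrt_nth_less[of "(\<ge>)" la i j]
    by (cases "i = j") (auto simp: part_def is_partition_def)
qed (simp add: part_def)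

lemma partition_fun_mono: "partition_fun n f \<Longrightarrow> n \<le> m \<Longrightarrow> partition_fun m f"
  unfolding partition_fun_def by auto

lemma down_closed_eq_lessThan_card:
  fixes A :: "nat set"
  assumes "finite A" "\<And>x y. x \<in> A \<Longrightarrow> y < x \<Longrightarrow> y \<in> A"
  shows "A = {..<card A}"
proof (cases "A = {}")
  case False
  then have "Max A \<in> A"
    using assms(1) by simp
  have "A \<subseteq> {..Max A}"
    using assms(1) by auto
  moreover have "{..Max A} \<subseteq> A"
    using assms(2) \<open>Max A \<in> A\<close> by (auto simp: le_less)
  ultimately have "A = {..Max A}" ..
  then show ?thesis
    by (metis card_atMost lessThan_Suc_atMost)
qed simp

lemma
  assumes "partition_fun n f"
  shows less_col_len_iff: "i < col_len f j \<longleftrightarrow> j < f i"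
    and col_len_le: "col_len f j \<le> n"
proof -
  have rows: "{i. j < f i} \<subseteq> {..<n}"
    using assms unfolding partition_fun_def by (auto simp: not_less[symmetric])
  have "f x \<le> f y" if "y < x" for x y
    using assms that unfolding partition_fun_def by (simp add: antimonoD)
  then have "{i. j < f i} = {..<col_len f j}"
    unfolding col_len_def using finite_subset[OF rows]
    by (intro down_closed_eq_lessThan_card) (auto intro: less_le_trans)
  then show "i < col_len f j \<longleftrightarrow> j < f i" and "col_len f j \<le> n"
    using rows by auto
qed

lemma col_len_antimono:
  assumes "partition_fun n f"
  shows "antimono (col_len f)"
proof
  fix j j' :: nat assume "j \<le> j'"
  then have "i < col_len f j" if "i < col_len f j'" for i
    using that by (simp add: less_col_len_iff[OF assms])
  then show "col_len f j' \<le> col_len f j"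
    using leI less_irrefl by blast
qed

lemma partition_fun_eq_part:
  assumes "partition_fun n f"
  obtains la where "is_partition la" "part la = f" "length la \<le> n"
proof
  let ?la = "map f [0..<col_len f 0]"
  have nth: "?la ! i = f i" if "i < col_len f 0" for i
    using that by simp
  show "is_partition ?la"
    unfolding is_partition_def sorted_wrt_iff_nth_less
  proof (intro conjI allI impI ballI)
    fix i j assume "i < j" "j < length ?la"
    moreover have "antimono f"
      using assms by (simp add: partition_fun_def)
    ultimately show "?la ! j \<le> ?la ! i"
      using nth[of i] nth[of j] by (simp add: antimonoD)
  next
    fix x assume "x \<in> set ?la"
    then show "0 < x"
      using less_col_len_iff[OF assms] by auto
  qed
  show "part ?la = f"
  proof
    fix i
    show "part ?la i = f i"
      using nth[of i] less_col_len_iff[OF assms, of i 0] by (simp add: part_def)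
  qed
  show "length ?la \<le> n"
    using col_len_le[OF assms] by simp
qed

lemma le_if_diagram_subset:
  assumes "diagram g \<subseteq> diagram f"
  shows "g i \<le> f i"
proof (rule ccontr)
  assume "\<not> g i \<le> f i"
  then have "(i, f i) \<in> diagram g - diagram f"
    unfolding diagram_def by simp
  with assms show False
    by blast
qed

lemma beta_strict_antimono:
  assumes "partition_fun n f" "i < i'" "i' < n"
  shows "beta f n i' < beta f n i"
proof -
  have "f i' \<le> f i"
    using assms(1,2) unfolding partition_fun_def by (simp add: antimonoD)
  then show ?thesis
    using assms(2,3) unfolding beta_def by linarith
qed

lemma antimono_beta:
  assumes "partition_fun n f"
  shows "antimono (beta f n)"
proof (rule antimonoI)
  fix i i' :: nat assume "i \<le> i'"
  then have "f i' \<le> f i"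
    using assms unfolding partition_fun_def by (simp add: antimonoD)
  with \<open>i \<le> i'\<close> show "beta f n i' \<le> beta f n i"
    unfolding beta_def by linarith
qed

lemma inj_on_beta:
  assumes "partition_fun n f"
  shows "inj_on (beta f n) {..<n}"
  by (rule inj_onI) (metis assms beta_strict_antimono lessThan_iff linorder_neqE_nat less_irrefl)

lemma row_less_if_cell:
  assumes "partition_fun n f" "j < f i"
  shows "i < n"
  using assms unfolding partition_fun_def by (metis not_le not_less0)

lemma hook_fn_eq:
  assumes "partition_fun n f" "j < f i"
  shows "hook_fn f (i, j) = (f i - Suc j) + (col_len f j - Suc i) + 1"
proof -
  have "{j'. j < j' \<and> (i, j') \<in> diagram f} = {Suc j..<f i}"
    unfolding diagram_def by auto
  moreover have "{i'. i < i' \<and> (i', j) \<in> diagram f} = {Suc i..<col_len f j}"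
    unfolding diagram_def using less_col_len_iff[OF assms(1)] by auto
  ultimately show ?thesis
    unfolding hook_fn_def by simp
qed

lemma col_gap_less_beta_iff:
  assumes "partition_fun n f" "i < n"
  shows "col_gap f n j < beta f n i \<longleftrightarrow> j < f i"
    and "col_gap f n j \<noteq> beta f n i"
  using less_col_len_iff[OF assms(1), of i j] col_len_le[OF assms(1), of j] assms(2)
  unfolding col_gap_def beta_def by linarith+

lemma col_gap_not_in_beta_set:
  assumes "partition_fun n f"
  shows "col_gap f n j \<notin> beta_set f n"
  using col_gap_less_beta_iff(2)[OF assms] unfolding beta_set_def by auto

lemma hook_fn_eq_beta_diff:
  assumes "partition_fun n f" "j < f i"
  shows "hook_fn f (i, j) = beta f n i - col_gap f n j"
  using hook_fn_eq[OF assms] less_col_len_iff[OF assms(1), of i j] col_len_le[OF assms(1), of j] assms(2)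
  unfolding col_gap_def beta_def by linarith

lemma col_gap_strict_mono:
  assumes "partition_fun n f"
  shows "strict_mono (col_gap f n)"
proof (rule strict_monoI)
  fix j j' :: nat assume "j < j'"
  then show "col_gap f n j < col_gap f n j'"
    using antimonoD[OF col_len_antimono[OF assms], of j j'] col_len_le[OF assms, of j]
    unfolding col_gap_def by linarith
qed

lemma beads_above_gap:
  assumes f: "partition_fun n f" and gap: "c \<notin> beta_set f n"
  obtains k where "k \<le> n" "n \<le> c + k" "\<And>i. i < n \<Longrightarrow> c < beta f n i \<longleftrightarrow> i < k"
proof
  define k where "k = card {i. i < n \<and> c < beta f n i}"
  have "{i. i < n \<and> c < beta f n i} = {..<k}"
    unfolding k_def
    by (rule down_closed_eq_lessThan_card) (auto dest: beta_strict_antimono[OF f])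
  then have above: "i < k \<longleftrightarrow> i < n \<and> c < beta f n i" for i
    by auto
  then show "k \<le> n" "\<And>i. i < n \<Longrightarrow> c < beta f n i \<longleftrightarrow> i < k"
    using above[of n] by (auto simp: not_less[symmetric])
  have "beta f n k < c" if "k < n"
  proof -
    have "beta f n k \<noteq> c"
      using gap that unfolding beta_set_def by blast
    with above[of k] that show ?thesis
      by auto
  qed
  then show "n \<le> c + k"
    using \<open>k \<le> n\<close> unfolding beta_def by (cases "k < n") linarith+
qed

lemma gap_eq_col_gap:
  assumes f: "partition_fun n f" and gap: "c \<notin> beta_set f n"
  obtains j where "c = col_gap f n j"
proof -
  obtain k where k: "k \<le> n" "n \<le> c + k" and above: "\<And>i. i < n \<Longrightarrow> c < beta f n i \<longleftrightarrow> i < k"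
    using beads_above_gap[OF assms] by blast
  define j where "j = c + k - n"
  have antimono: "f i' \<le> f i" if "i \<le> i'" for i i'
    using f that unfolding partition_fun_def by (simp add: antimonoD)
  have "j < f i \<longleftrightarrow> i < k" for i
  proof
    assume "i < k"
    then have "c < f (k - 1) + n - k" "f (k - 1) \<le> f i"
      using above[of "k - 1"] k antimono unfolding beta_def by auto
    then show "j < f i"
      using k unfolding j_def by linarith
  next
    assume "j < f i"
    have "f k \<le> j"
    proof (cases "k < n")
      case True
      then have "beta f n k \<noteq> c"
        using gap unfolding beta_set_def by blast
      with True above[of k] k show ?thesis
        unfolding j_def beta_def by auto
    qed (use f k in \<open>simp add: partition_fun_def\<close>)
    with \<open>j < f i\<close> show "i < k"
      using antimono[of k i] by (meson le_less_trans not_le)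
  qed
  then have "col_len f j = k"
    using less_col_len_iff[OF f] by (metis linorder_neqE_nat less_irrefl)
  then have "c = col_gap f n j"
    using k unfolding col_gap_def j_def by simp
  then show thesis
    by (rule that)
qed

lemma bij_betw_hooks_bead_gap_pairs:
  assumes f: "partition_fun n f"
  shows "bij_betw (\<lambda>(i, j). (beta f n i, col_gap f n j))
    {c \<in> diagram f. Q (hook_fn f c)} (bead_gap_pairs Q (beta_set f n))"
proof (rule bij_betw_imageI)
  show "inj_on (\<lambda>(i, j). (beta f n i, col_gap f n j)) {c \<in> diagram f. Q (hook_fn f c)}"
    using inj_onD[OF inj_on_beta[OF f]] strict_mono_eq[OF col_gap_strict_mono[OF f]]
      row_less_if_cell[OF f]
    by (auto simp: inj_on_def diagram_def)
  show "(\<lambda>(i, j). (beta f n i, col_gap f n j)) ` {c \<in> diagram f. Q (hook_fn f c)}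
      = bead_gap_pairs Q (beta_set f n)"
  proof (intro set_eqI iffI)
    fix q assume "q \<in> (\<lambda>(i, j). (beta f n i, col_gap f n j)) ` {c \<in> diagram f. Q (hook_fn f c)}"
    then obtain i j where q: "q = (beta f n i, col_gap f n j)" "j < f i" "Q (hook_fn f (i, j))"
      by (auto simp: diagram_def)
    then have "i < n"
      using row_less_if_cell[OF f] by blast
    then show "q \<in> bead_gap_pairs Q (beta_set f n)"
      using q col_gap_less_beta_iff(1)[OF f] col_gap_not_in_beta_set[OF f]
        hook_fn_eq_beta_diff[OF f q(2)]
      by (auto simp: bead_gap_pairs_def beta_set_def)
  next
    fix q assume "q \<in> bead_gap_pairs Q (beta_set f n)"
    then obtain i c where q: "q = (beta f n i, c)" "i < n" "c \<notin> beta_set f n"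
      "c < beta f n i" "Q (beta f n i - c)"
      by (auto simp: bead_gap_pairs_def beta_set_def)
    obtain j where j: "c = col_gap f n j"
      using gap_eq_col_gap[OF f q(3)] .
    then have "j < f i"
      using q col_gap_less_beta_iff(1)[OF f] by simp
    then show "q \<in> (\<lambda>(i, j). (beta f n i, col_gap f n j)) ` {c \<in> diagram f. Q (hook_fn f c)}"
      using q j hook_fn_eq_beta_diff[OF f] by (auto simp: diagram_def intro!: image_eqI[where x = "(i, j)"])
  qed
qed

lemma prod_hooks_eq_bead_gap_prod:
  assumes "is_partition la" "length la \<le> n"
  shows "(\<Prod>c \<in> {c \<in> cells la. Q (hook la c)}. hook la c)
    = (\<Prod>(b, c)\<in>bead_gap_pairs Q (beta_set (part la) n). b - c)"
proof -
  have f: "partition_fun n (part la)"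
    using partition_fun_mono[OF partition_fun_part[OF assms(1)] assms(2)] .
  have "(\<Prod>c \<in> {c \<in> cells la. Q (hook la c)}. hook la c)
      = (\<Prod>c \<in> {c \<in> diagram (part la). Q (hook_fn (part la) c)}.
          (\<lambda>(b, c). b - c) ((\<lambda>(i, j). (beta (part la) n i, col_gap (part la) n j)) c))"
    unfolding cells_eq_diagram_part hook_eq_hook_fn_part
    by (rule prod.cong) (auto simp: diagram_def hook_fn_eq_beta_diff[OF f])
  also have "\<dots> = (\<Prod>(b, c)\<in>bead_gap_pairs Q (beta_set (part la) n). b - c)"
    by (rule prod.reindex_bij_betw[OF bij_betw_hooks_bead_gap_pairs[OF f]])
  finally show ?thesis .
qed

section \<open>Border strips\<close>

lemma sum_diff_Suc_telescope:
  fixes a :: "nat \<Rightarrow> nat"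
  assumes "antimono a" "r \<le> s"
  shows "(\<Sum>i = r..<s. a i - a (Suc i)) = a r - a s"
  using assms(2)
proof (induction s rule: dec_induct)
  case (step s)
  moreover have "a (Suc s) \<le> a s" "a s \<le> a r"
    using assms(1) step.hyps(1) by (simp_all add: antimonoD)
  ultimately show ?case
    by simp
qed simp

text \<open>g arises from f by removing a border strip occupying rows r to s; consecutive rows of the
  strip share exactly one column.\<close>
definition strip_rows :: "(nat \<Rightarrow> nat) \<Rightarrow> (nat \<Rightarrow> nat) \<Rightarrow> nat \<Rightarrow> nat \<Rightarrow> bool" where
  "strip_rows f g r s \<longleftrightarrow> r \<le> s \<and> (\<forall>i. i < r \<or> s < i \<longrightarrow> g i = f i) \<and>
     (\<forall>i. r \<le> i \<and> i < s \<longrightarrow> Suc (g i) = f (Suc i)) \<and> g s < f s"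

lemma strip_rows_less_iff:
  assumes "partition_fun n f" "strip_rows f g r s"
  shows "g i < f i \<longleftrightarrow> r \<le> i \<and> i \<le> s"
proof -
  have "f (Suc i) \<le> f i" for i
    using assms(1) unfolding partition_fun_def by (simp add: antimonoD)
  then show ?thesis
    using assms(2) unfolding strip_rows_def by (metis le_less le_neq_implies_less not_less Suc_le_lessD)
qed

lemma strip_rows_le:
  assumes "partition_fun n f" "strip_rows f g r s"
  shows "g i \<le> f i"
  using strip_rows_less_iff[OF assms, of i] assms(2) unfolding strip_rows_def
  by (metis le_less not_le)

lemma strip_rows_last_less:
  assumes "partition_fun n f" "strip_rows f g r s"
  shows "s < n"
  using row_less_if_cell[OF assms(1)] assms(2) unfolding strip_rows_def by blast

lemma diagram_diff_strip_rows:
  assumes "partition_fun n f" "strip_rows f g r s"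
  shows "diagram f - diagram g = Sigma {r..s} (\<lambda>i. {g i..<f i})"
proof -
  have "r \<le> i \<and> i \<le> s" if "g i \<le> j" "j < f i" for i j
    using that strip_rows_less_iff[OF assms, of i] by linarith
  then show ?thesis
    unfolding diagram_def by (fastforce simp: not_less)
qed

lemma card_strip_rows:
  assumes f: "partition_fun n f" and strip: "strip_rows f g r s"
  shows "card (diagram f - diagram g) = beta f n r - beta g n s"
proof -
  have rs: "r \<le> s" and mid: "\<And>i. r \<le> i \<Longrightarrow> i < s \<Longrightarrow> Suc (g i) = f (Suc i)"
    using strip unfolding strip_rows_def by auto
  have sn: "s < n"
    by (rule strip_rows_last_less[OF assms])
  have le: "g i \<le> f i" for i
    by (rule strip_rows_le[OF assms])
  have "card (diagram f - diagram g) = (\<Sum>i = r..s. f i - g i)"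
    unfolding diagram_diff_strip_rows[OF assms] by (simp add: card_SigmaI)
  also have "\<dots> = (\<Sum>i = r..<s. f i - g i) + (f s - g s)"
    using rs by (simp add: atLeastLessThanSuc_atLeastAtMost[symmetric])
  also have "(\<Sum>i = r..<s. f i - g i) = (\<Sum>i = r..<s. beta f n i - beta f n (Suc i))"
  proof (rule sum.cong[OF refl])
    fix i assume "i \<in> {r..<s}"
    then have "Suc (g i) = f (Suc i)" "i < n"
      using mid sn by auto
    then show "f i - g i = beta f n i - beta f n (Suc i)"
      unfolding beta_def by simp
  qed
  also have "\<dots> = beta f n r - beta f n s"
    by (rule sum_diff_Suc_telescope[OF antimono_beta[OF f] rs])
  also have "f s - g s = beta f n s - beta g n s"
    using sn le[of s] unfolding beta_def by simp
  also have "beta f n r - beta f n s + (beta f n s - beta g n s) = beta f n r - beta g n s"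
    using antimonoD[OF antimono_beta[OF f] rs] le[of s] unfolding beta_def by simp
  finally show ?thesis .
qed

lemma image_beta_strip_rows:
  assumes "partition_fun n f" "strip_rows f g r s"
  shows "beta g n ` ({..<n} - {s}) = beta f n ` ({..<n} - {r})"
proof -
  have rs: "r \<le> s" and sn: "s < n"
    using assms(2) strip_rows_last_less[OF assms] unfolding strip_rows_def by auto
  have out: "beta g n i = beta f n i" if "i < r \<or> s < i" for i
    using assms(2) that unfolding strip_rows_def beta_def by auto
  have mid: "beta g n i = beta f n (Suc i)" if "r \<le> i" "i < s" for i
    using assms(2) that unfolding strip_rows_def beta_def by (metis diff_Suc_Suc add_Suc)
  have "beta g n ` ({..<n} - {s}) = beta g n ` ({..<r} \<union> {r..<s} \<union> {Suc s..<n})"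
    using rs sn by (intro arg_cong[where f = "image (beta g n)"]) auto
  also have "\<dots> = beta f n ` {..<r} \<union> beta f n ` (Suc ` {r..<s}) \<union> beta f n ` {Suc s..<n}"
    unfolding image_Un image_image using out mid by (intro arg_cong2[where f = "(\<union>)"] image_cong) auto
  also have "\<dots> = beta f n ` ({..<r} \<union> {Suc r..<Suc s} \<union> {Suc s..<n})"
    by (simp add: image_Un)
  also have "{..<r} \<union> {Suc r..<Suc s} \<union> {Suc s..<n} = {..<n} - {r}"
    using rs sn by auto
  finally show ?thesis .
qed

lemma beta_set_strip_rows:
  assumes f: "partition_fun n f" and g: "partition_fun n g" and strip: "strip_rows f g r s"
  shows "beta_set g n = insert (beta g n s) (beta_set f n - {beta f n r})"
    and "beta g n s \<notin> beta_set f n"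
proof -
  have rs: "r \<le> s" and sn: "s < n"
    using strip strip_rows_last_less[OF f strip] unfolding strip_rows_def by auto
  have rest: "beta g n ` ({..<n} - {s}) = beta_set f n - {beta f n r}"
    unfolding image_beta_strip_rows[OF f strip] beta_set_def
    using rs sn by (simp add: inj_on_image_set_diff[OF inj_on_beta[OF f]])
  have "beta_set g n = insert (beta g n s) (beta g n ` ({..<n} - {s}))"
    unfolding beta_set_def using sn by blast
  then show "beta_set g n = insert (beta g n s) (beta_set f n - {beta f n r})"
    unfolding rest .
  have "beta g n s < beta f n s" "beta f n s \<le> beta f n r"
    using strip sn antimonoD[OF antimono_beta[OF f] rs] unfolding strip_rows_def beta_def by auto
  moreover have "beta g n s \<notin> beta g n ` ({..<n} - {s})"
    using sn inj_on_beta[OF g] by (auto simp: inj_on_def)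
  ultimately show "beta g n s \<notin> beta_set f n"
    unfolding rest by auto
qed

lemma partition_fun_strip_rows:
  assumes f: "partition_fun n f" and strip: "strip_rows f g r s" and "f (Suc s) \<le> g s"
  shows "partition_fun n g"
proof -
  have "g (Suc i) \<le> g i" for i
  proof -
    consider "Suc i < r \<or> s < i" | "Suc i = r" | "r \<le> i \<and> i < s" | "i = s"
      by linarith
    then show ?thesis
    proof cases
      case 1
      then show ?thesis
        using strip f unfolding strip_rows_def partition_fun_def by (auto simp: antimonoD)
    next
      case 2
      then show ?thesis
        using strip_rows_le[OF f strip, of r] strip f unfolding strip_rows_def partition_fun_def
        by (auto simp: antimonoD intro: order.trans)
    next
      case 3
      then show ?thesis
        using strip_rows_less_iff[OF f strip, of "Suc i"] strip unfolding strip_rows_def by force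
    next
      case 4
      then show ?thesis
        using strip assms(3) unfolding strip_rows_def by simp
    qed
  qed
  moreover have "g i = 0" if "n \<le> i" for i
    using strip_rows_last_less[OF f strip] strip f that unfolding strip_rows_def partition_fun_def by simp
  ultimately show ?thesis
    unfolding partition_fun_def antimono_iff_le_Suc by blast
qed

abbreviation adjacent_in :: "(nat \<times> nat) set \<Rightarrow> nat \<times> nat \<Rightarrow> nat \<times> nat \<Rightarrow> bool" where
  "adjacent_in S \<equiv> \<lambda>x y. x \<in> S \<and> y \<in> S \<and> adjacent x y"

lemma symp_adjacent_in: "symp (adjacent_in S)"
  by (rule sympI) (auto simp: adjacent_def split: prod.splits)

lemma adjacent_path_crosses_row:
  assumes "(adjacent_in S)\<^sup>*\<^sup>* c d" "fst c \<le> i" "i < fst d"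
  shows "\<exists>j. (i, j) \<in> S \<and> (Suc i, j) \<in> S"
  using assms
proof (induction arbitrary: i rule: rtranclp_induct)
  case (step y z)
  show ?case
  proof (cases "i < fst y")
    case False
    obtain a b a' b' where yz: "y = (a, b)" "z = (a', b')"
      by fastforce
    with step.hyps(2) False step.prems have "a = i" "a' = Suc i" "b' = b"
      unfolding adjacent_def by auto
    with step.hyps(2) yz show ?thesis
      by blast
  qed (use step in blast)
qed simp

lemma no_2x2_vertical_pair:
  assumes f: "partition_fun n f" and g: "partition_fun n g" and no2x2: "no_2x2 (diagram f - diagram g)"
    and "(i, j) \<in> diagram f - diagram g" "(Suc i, j) \<in> diagram f - diagram g"
  shows "Suc (g i) = f (Suc i)"
proof (rule ccontr)
  assume "Suc (g i) \<noteq> f (Suc i)"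
  moreover have "g i < f (Suc i)"
    using assms(4,5) unfolding diagram_def by auto
  moreover have "f (Suc i) \<le> f i" "g (Suc i) \<le> g i"
    using f g unfolding partition_fun_def by (simp_all add: antimonoD)
  ultimately have "(i, g i) \<in> diagram f - diagram g" "(Suc i, g i) \<in> diagram f - diagram g"
    "(i, Suc (g i)) \<in> diagram f - diagram g" "(Suc i, Suc (g i)) \<in> diagram f - diagram g"
    unfolding diagram_def by auto
  with no2x2 show False
    unfolding no_2x2_def by blast
qed

lemma strip_rows_if_border_strip:
  assumes f: "partition_fun n f" and g: "partition_fun n g" and le: "\<And>i. g i \<le> f i"
    and conn: "cells_connected (diagram f - diagram g)" and no2x2: "no_2x2 (diagram f - diagram g)"
  obtains r s where "strip_rows f g r s"
proof
  define R where "R = {i. g i < f i}"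
  have "R \<subseteq> {..<n}"
    using row_less_if_cell[OF f] unfolding R_def by auto
  then have finR: "finite R"
    by (rule finite_subset) simp
  obtain i j where "(i, j) \<in> diagram f - diagram g"
    using conn unfolding cells_connected_def by fast
  then have "i \<in> R"
    unfolding R_def diagram_def by simp
  then have "R \<noteq> {}"
    by blast
  define r where "r = Min R"
  define s where "s = Max R"
  have "r \<in> R" "s \<in> R" "r \<le> s"
    using finR \<open>R \<noteq> {}\<close> unfolding r_def s_def by auto
  have out: "g i = f i" if "i < r \<or> s < i" for i
  proof -
    have "i \<notin> R"
      using that Min_le[OF finR] Max_ge[OF finR] unfolding r_def s_def by fastforce
    then show ?thesis
      using le[of i] unfolding R_def by simp
  qed
  have mid: "Suc (g i) = f (Suc i)" if ri: "r \<le> i" "i < s" for i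
  proof -
    have "(r, g r) \<in> diagram f - diagram g" "(s, g s) \<in> diagram f - diagram g"
      using \<open>r \<in> R\<close> \<open>s \<in> R\<close> unfolding R_def diagram_def by auto
    then have path: "(adjacent_in (diagram f - diagram g))\<^sup>*\<^sup>* (r, g r) (s, g s)"
      using conn unfolding cells_connected_def by blast
    obtain j where "(i, j) \<in> diagram f - diagram g" "(Suc i, j) \<in> diagram f - diagram g"
      using adjacent_path_crosses_row[OF path, of i] ri by auto
    then show ?thesis
      by (rule no_2x2_vertical_pair[OF f g no2x2])
  qed
  show "strip_rows f g r s"
    unfolding strip_rows_def using \<open>r \<le> s\<close> out mid \<open>s \<in> R\<close> unfolding R_def by blast
qed

lemma adjacent_in_row_path:
  assumes "j \<le> k" "\<And>j'. j \<le> j' \<Longrightarrow> j' \<le> k \<Longrightarrow> (i, j') \<in> S"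
  shows "(adjacent_in S)\<^sup>*\<^sup>* (i, j) (i, k)"
  using assms
proof (induction k rule: dec_induct)
  case (step k)
  then have "(adjacent_in S)\<^sup>*\<^sup>* (i, j) (i, k)" "adjacent_in S (i, k) (i, Suc k)"
    by (simp_all add: adjacent_def)
  then show ?case
    by (rule rtranclp.rtrancl_into_rtrancl)
qed simp

lemma diagram_diff_path_to_row_end:
  assumes "(i, j) \<in> diagram f - diagram g"
  shows "(adjacent_in (diagram f - diagram g))\<^sup>*\<^sup>* (i, j) (i, f i - 1)"
  using assms unfolding diagram_def by (intro adjacent_in_row_path) auto

lemma no_2x2_strip_rows:
  assumes "partition_fun n f" "strip_rows f g r s"
  shows "no_2x2 (diagram f - diagram g)"
  unfolding no_2x2_def
proof
  assume "\<exists>i j. (i, j) \<in> diagram f - diagram g \<and> (Suc i, j) \<in> diagram f - diagram g \<and>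
    (i, Suc j) \<in> diagram f - diagram g \<and> (Suc i, Suc j) \<in> diagram f - diagram g"
  then obtain i j where "g i \<le> j" "Suc j < f (Suc i)" "g (Suc i) < f (Suc i)"
    unfolding diagram_def by (auto simp: not_less)
  moreover have "f (Suc i) \<le> f i"
    using assms(1) unfolding partition_fun_def by (simp add: antimonoD)
  ultimately have "r \<le> i" "i < s"
    using strip_rows_less_iff[OF assms, of i] strip_rows_less_iff[OF assms, of "Suc i"] by auto
  then have "Suc (g i) = f (Suc i)"
    using assms(2) unfolding strip_rows_def by blast
  with \<open>g i \<le> j\<close> \<open>Suc j < f (Suc i)\<close> show False
    by simp
qed

lemma cells_connected_strip_rows:
  assumes f: "partition_fun n f" and strip: "strip_rows f g r s"
  shows "cells_connected (diagram f - diagram g)"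
proof -
  let ?S = "diagram f - diagram g"
  have row_end_to_top: "(adjacent_in ?S)\<^sup>*\<^sup>* (i, f i - 1) (r, f r - 1)" if "r \<le> i" "i \<le> s" for i
    using that
  proof (induction i rule: dec_induct)
    case (step i)
    then have "Suc (g i) = f (Suc i)" "g i < f i" "g (Suc i) < f (Suc i)"
      using strip strip_rows_less_iff[OF f strip] unfolding strip_rows_def by auto
    then have "adjacent_in ?S (Suc i, f (Suc i) - 1) (i, g i)"
      by (auto simp: diagram_def adjacent_def)
    moreover have "(adjacent_in ?S)\<^sup>*\<^sup>* (i, g i) (i, f i - 1)"
      using \<open>g i < f i\<close> by (intro diagram_diff_path_to_row_end) (simp add: diagram_def)
    moreover have "(adjacent_in ?S)\<^sup>*\<^sup>* (i, f i - 1) (r, f r - 1)"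
      using step.IH step.prems by simp
    ultimately show ?case
      by (rule converse_rtranclp_into_rtranclp[OF _ rtranclp_trans])
  qed simp
  have to_anchor: "(adjacent_in ?S)\<^sup>*\<^sup>* c (r, f r - 1)" if "c \<in> ?S" for c
  proof -
    obtain i j where c: "c = (i, j)"
      by fastforce
    then have "r \<le> i" "i \<le> s"
      using that strip_rows_less_iff[OF f strip, of i] by (auto simp: diagram_def)
    then show ?thesis
      using rtranclp_trans[OF diagram_diff_path_to_row_end row_end_to_top] that c by blast
  qed
  have "(r, g r) \<in> ?S"
    using strip_rows_less_iff[OF f strip, of r] strip by (simp add: diagram_def strip_rows_def)
  show ?thesis
    unfolding cells_connected_def
  proof (intro conjI ballI)
    show "?S \<noteq> {}"
      using \<open>(r, g r) \<in> ?S\<close> by blast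
    fix c d assume "c \<in> ?S" "d \<in> ?S"
    have "(adjacent_in ?S)\<^sup>*\<^sup>* (r, f r - 1) d"
      using sympD[OF symp_rtranclp[OF symp_adjacent_in] to_anchor[OF \<open>d \<in> ?S\<close>]] .
    with to_anchor[OF \<open>c \<in> ?S\<close>] show "(adjacent_in ?S)\<^sup>*\<^sup>* c d"
      by (rule rtranclp_trans)
  qed
qed

text \<open>The strip starts at the end of row r and ends in column j of row s, the last row meeting
  column j, where col_gap f n j is the target position of the bead.\<close>
lemma ex_strip_rows_to_gap:
  assumes f: "partition_fun n f" and "r < n" "0 < p" "p \<le> beta f n r"
    and gap: "beta f n r - p \<notin> beta_set f n"
  obtains g s where "partition_fun n g" "strip_rows f g r s" "beta g n s = beta f n r - p"
proof -
  obtain j where j: "beta f n r - p = col_gap f n j"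
    using gap_eq_col_gap[OF f gap] .
  moreover have "beta f n r - p < beta f n r"
    using assms(3,4) by linarith
  ultimately have "j < f r"
    using col_gap_less_beta_iff(1)[OF f \<open>r < n\<close>, of j] by simp
  define s where "s = col_len f j - 1"
  have "r < col_len f j"
    using \<open>j < f r\<close> less_col_len_iff[OF f] by simp
  then have rs: "r \<le> s" and col_len: "col_len f j = Suc s"
    unfolding s_def by auto
  have in_col: "j < f i \<longleftrightarrow> i \<le> s" for i
    using less_col_len_iff[OF f, of i j] col_len by (simp add: less_Suc_eq_le)
  define g where "g i = (if r \<le> i \<and> i < s then f (Suc i) - 1 else if i = s then j else f i)" for i
  have "0 < f (Suc i)" if "i < s" for i
    using that in_col[of "Suc i"] by simp
  then have strip: "strip_rows f g r s"
    unfolding strip_rows_def g_def using rs in_col[of s] by auto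
  moreover have "partition_fun n g"
    using partition_fun_strip_rows[OF f strip] in_col[of "Suc s"] unfolding g_def by simp
  moreover have "beta g n s = col_gap f n j"
    unfolding col_gap_def beta_def g_def col_len by simp
  then have "beta g n s = beta f n r - p"
    using j by simp
  ultimately show ?thesis
    using that by blast
qed

lemma remove_strip_length_le:
  assumes "remove_strip p la mu"
  shows "length mu \<le> length la"
proof (rule ccontr)
  assume "\<not> length mu \<le> length la"
  then have "(length la, 0) \<in> cells mu"
    using assms unfolding remove_strip_def is_partition_def cells_def by auto
  then show False
    using assms unfolding remove_strip_def cells_def by auto
qed

lemma remove_strip_residue_counts:
  assumes strip: "remove_strip p la mu" and la: "is_partition la" "length la \<le> n" and "0 < p"
  shows "card {x \<in> beta_set (part mu) n. x mod p = t} = card {x \<in> beta_set (part la) n. x mod p = t}"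
proof -
  have f: "partition_fun n (part la)"
    using partition_fun_mono[OF partition_fun_part[OF la(1)] la(2)] .
  have "is_partition mu" "length mu \<le> n"
    using strip remove_strip_length_le[OF strip] la(2) unfolding remove_strip_def by auto
  then have g: "partition_fun n (part mu)"
    using partition_fun_mono[OF partition_fun_part] by blast
  have "part mu i \<le> part la i" for i
    using strip unfolding remove_strip_def cells_eq_diagram_part by (blast intro: le_if_diagram_subset)
  then obtain r s where rs: "strip_rows (part la) (part mu) r s"
    using strip_rows_if_border_strip[OF f g] strip unfolding remove_strip_def cells_eq_diagram_part
    by blast
  have "beta (part mu) n s + p = beta (part la) n r"
    using card_strip_rows[OF f rs] strip \<open>0 < p\<close> unfolding remove_strip_def cells_eq_diagram_part
    by simp
  moreover have "beta (part la) n r \<in> beta_set (part la) n"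
    using rs strip_rows_last_less[OF f rs] unfolding strip_rows_def beta_set_def by simp
  ultimately show ?thesis
    unfolding beta_set_strip_rows(1)[OF f g rs]
    by (intro card_mod_insert_Diff beta_set_strip_rows(2)[OF f g rs]) (simp_all add: beta_set_def)
qed

lemma rtranclp_remove_strip_residue_counts:
  assumes "(remove_strip p)\<^sup>*\<^sup>* la mu" "is_partition la" "length la \<le> n" "0 < p"
  shows "is_partition mu \<and> length mu \<le> n \<and>
    (\<forall>t. card {x \<in> beta_set (part mu) n. x mod p = t} = card {x \<in> beta_set (part la) n. x mod p = t})"
  using assms(1)
proof (induction rule: rtranclp_induct)
  case (step nu mu)
  then have "is_partition nu" "length nu \<le> n"
    by simp_all
  then show ?case
    using step remove_strip_residue_counts[OF step.hyps(2) _ _ assms(4)]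
      remove_strip_length_le[OF step.hyps(2)]
    unfolding remove_strip_def by simp
qed (use assms(2,3) in simp)

lemma p_down_closed_beta_set_if_no_strip:
  assumes mu: "is_partition mu" "length mu \<le> n" and "0 < p" and core: "\<nexists>nu. remove_strip p mu nu"
  shows "p_down_closed p (beta_set (part mu) n)"
  unfolding p_down_closed_def
proof (intro ballI impI, rule ccontr)
  let ?f = "part mu"
  fix y assume y: "y \<in> beta_set ?f n" "p \<le> y" "y - p \<notin> beta_set ?f n"
  have f: "partition_fun n ?f"
    using partition_fun_mono[OF partition_fun_part[OF mu(1)] mu(2)] .
  obtain r where r: "r < n" "y = beta ?f n r"
    using y(1) unfolding beta_set_def by auto
  obtain g s where g: "partition_fun n g" "strip_rows ?f g r s" "beta g n s = beta ?f n r - p"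
    using ex_strip_rows_to_gap[OF f r(1) \<open>0 < p\<close>] y r(2) by blast
  obtain nu where nu: "is_partition nu" "part nu = g"
    using partition_fun_eq_part[OF g(1)] by blast
  have "remove_strip p mu nu"
    unfolding remove_strip_def cells_eq_diagram_part nu(2)
  proof (intro conjI)
    show "diagram g \<subseteq> diagram ?f"
      using strip_rows_le[OF f g(2)] unfolding diagram_def by (auto intro: less_le_trans)
    show "card (diagram ?f - diagram g) = p"
      using card_strip_rows[OF f g(2)] g(3) y(2) r(2) by simp
  qed (use nu(1) cells_connected_strip_rows[OF f g(2)] no_2x2_strip_rows[OF f g(2)] in auto)
  with core show False
    by blast
qed

theorem corollary7p3:
  fixes p :: nat and la mu :: "nat list"
  assumes "p \<ge> 2" and "is_partition la" and "is_p_core p la mu"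
  shows "hook_prod mu dvd hook_prod_non_pfold p la"
proof -
  define n where "n = length la"
  have p: "0 < p"
    using assms(1) by simp
  have chain: "(remove_strip p)\<^sup>*\<^sup>* la mu" and core: "\<nexists>nu. remove_strip p mu nu"
    using assms(3) unfolding is_p_core_def by auto
  have mu: "is_partition mu" "length mu \<le> n"
    and residues: "\<And>t. card {x \<in> beta_set (part la) n. x mod p = t} = card {x \<in> beta_set (part mu) n. x mod p = t}"
    using rtranclp_remove_strip_residue_counts[OF chain assms(2) _ p, of n] n_def by simp_all
  have "hook_prod mu = (\<Prod>(b, c)\<in>bead_gap_pairs (\<lambda>_. True) (beta_set (part mu) n). b - c)"
    using prod_hooks_eq_bead_gap_prod[OF mu, of "\<lambda>_. True"] by (simp add: hook_prod_def)
  moreover have "hook_prod_non_pfold p la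
      = (\<Prod>(b, c)\<in>bead_gap_pairs (\<lambda>h. \<not> p dvd h) (beta_set (part la) n). b - c)"
    using prod_hooks_eq_bead_gap_prod[OF assms(2), of n] by (simp add: hook_prod_non_pfold_def n_def)
  moreover have "finite (beta_set f n)" for f
    unfolding beta_set_def by simp
  ultimately show ?thesis
    using bead_gap_prod_dvd[OF _ _ p p_down_closed_beta_set_if_no_strip[OF mu p core] residues] by simp
qed

end
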